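(* Let $K$ be a field, $X$ a finite connected poset, and fix $u_0\in X$. Let $\varphi,\psi$ be elementary Lie automorphisms of $I(X,K)$ such that $\theta_\varphi=\theta_\psi$ and $\varphi(e_z)(u_0,u_0)=\psi(e_z)(u_0,u_0)$ for all $z\in X$. Then $\varphi(e_z)=\psi(e_z)$ for all $z\in X$.
   Context: $I(X,K)$ is the incidence algebra: functions $f:X\times X\to K$ with $f(x,y)=0$ unless $x\le y$, product $(fg)(x,y)=\sum_{x\le t\le y}f(x,t)g(t,y)$; $e_{xy}$ ($x\le y$) is the basis element equal to $1$ at $(x,y)$ and $0$ elsewhere, $e_z=e_{zz}$. $B=\{e_{xy}:x<y\}$. A Lie automorphism is a bijective linear map preserving $[f,g]=fg-gf$. With $l(\lfloor x,y\rfloor)$ the maximal length of a chain in $\{z:x\le z\le y\}$ and $L_i=\mathrm{span}_K\{e_{xy}:l(\lfloor x,y\rfloor)=i\}$, for a Lie automorphism $\chi$ let $\widetilde\chi$ send $e_{xy}\in L_i$ to the $L_i$-component of $\chi(e_{xy})$. A Lie automorphism $\varphi$ is elementary if $\varphi=\widetilde\chi$ for some Lie automorphism $\chi$ (equivalently $\varphi(L_i)\subseteq L_i$ for all $i$). For elementary $\varphi$, for each $x<y$ there are a unique $e_{uv}\in B$ and $k\in K^*$ with $\varphi(e_{xy})=k e_{uv}$; set $\theta_\varphi(e_{xy})=e_{uv}$. Connected means any two elements are joined by a sequence in which consecutive elements are in a covering relation. *)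

theory Defs
  imports Main
begin

text \<open>Incidence algebra I(X,K) of a finite poset X (the whole type 'a) over a field K.
Elements are functions f :: 'a => 'a => 'k vanishing off the order relation.\<close>

definition inc_alg :: "('a::order \<Rightarrow> 'a \<Rightarrow> 'k::field) set" where
  "inc_alg = {f. \<forall>x y. \<not> x \<le> y \<longrightarrow> f x y = 0}"

definition inc_mult :: "('a::{finite,order} \<Rightarrow> 'a \<Rightarrow> 'k::field) \<Rightarrow> ('a \<Rightarrow> 'a \<Rightarrow> 'k) \<Rightarrow> 'a \<Rightarrow> 'a \<Rightarrow> 'k" where
  "inc_mult f g = (\<lambda>x y. \<Sum>t\<in>{t. x \<le> t \<and> t \<le> y}. f x t * g t y)"

definition lie_bracket :: "('a::{finite,order} \<Rightarrow> 'a \<Rightarrow> 'k::field) \<Rightarrow> ('a \<Rightarrow> 'a \<Rightarrow> 'k) \<Rightarrow> 'a \<Rightarrow> 'a \<Rightarrow> 'k" where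
  "lie_bracket f g = (\<lambda>x y. inc_mult f g x y - inc_mult g f x y)"

text \<open>Basis element e_{xy}; e_z = e_{zz}.\<close>
definition eij :: "'a \<Rightarrow> 'a \<Rightarrow> 'a \<Rightarrow> 'a \<Rightarrow> 'k::field" where
  "eij x y = (\<lambda>u v. if u = x \<and> v = y then 1 else 0)"

definition is_lie_aut :: "(('a::{finite,order} \<Rightarrow> 'a \<Rightarrow> 'k::field) \<Rightarrow> ('a \<Rightarrow> 'a \<Rightarrow> 'k)) \<Rightarrow> bool" where
  "is_lie_aut \<phi> \<longleftrightarrow>
     bij_betw \<phi> inc_alg inc_alg \<and>
     (\<forall>f\<in>inc_alg. \<forall>g\<in>inc_alg. \<phi> (\<lambda>x y. f x y + g x y) = (\<lambda>x y. \<phi> f x y + \<phi> g x y)) \<and>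
     (\<forall>f\<in>inc_alg. \<forall>c. \<phi> (\<lambda>x y. c * f x y) = (\<lambda>x y. c * \<phi> f x y)) \<and>
     (\<forall>f\<in>inc_alg. \<forall>g\<in>inc_alg. \<phi> (lie_bracket f g) = lie_bracket (\<phi> f) (\<phi> g))"

definition chain_len :: "'a::{finite,order} \<Rightarrow> 'a \<Rightarrow> nat" where
  "chain_len x y = Max {card C - 1 | C. C \<subseteq> {z. x \<le> z \<and> z \<le> y} \<and> (\<forall>a\<in>C. \<forall>b\<in>C. a \<le> b \<or> b \<le> a)}"

text \<open>chi-tilde: linear extension of e_xy |-> L_i-component of chi(e_xy), where e_xy in L_i.\<close>
definition tilde :: "(('a::{finite,order} \<Rightarrow> 'a \<Rightarrow> 'k::field) \<Rightarrow> ('a \<Rightarrow> 'a \<Rightarrow> 'k)) \<Rightarrow> ('a \<Rightarrow> 'a \<Rightarrow> 'k) \<Rightarrow> 'a \<Rightarrow> 'a \<Rightarrow> 'k" where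
  "tilde \<chi> f = (\<lambda>u v. if u \<le> v then
       (\<Sum>p\<in>{(x,y). x \<le> y \<and> chain_len x y = chain_len u v}. f (fst p) (snd p) * \<chi> (eij (fst p) (snd p)) u v)
     else 0)"

definition elementary :: "(('a::{finite,order} \<Rightarrow> 'a \<Rightarrow> 'k::field) \<Rightarrow> ('a \<Rightarrow> 'a \<Rightarrow> 'k)) \<Rightarrow> bool" where
  "elementary \<phi> \<longleftrightarrow> is_lie_aut \<phi> \<and> (\<exists>\<chi>. is_lie_aut \<chi> \<and> (\<forall>f\<in>inc_alg. \<phi> f = tilde \<chi> f))"

text \<open>theta_phi(e_xy) = e_uv where phi(e_xy) = k e_uv, k nonzero, u < v (represented by the pair (u,v)).\<close>
definition theta :: "(('a::{finite,order} \<Rightarrow> 'a \<Rightarrow> 'k::field) \<Rightarrow> ('a \<Rightarrow> 'a \<Rightarrow> 'k)) \<Rightarrow> 'a \<Rightarrow> 'a \<Rightarrow> 'a \<times> 'a" where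
  "theta \<phi> x y = (THE p. fst p < snd p \<and>
      (\<exists>k. k \<noteq> 0 \<and> \<phi> (eij x y) = (\<lambda>a b. k * eij (fst p) (snd p) a b)))"

definition covers :: "'a::order \<Rightarrow> 'a \<Rightarrow> bool" where
  "covers a b \<longleftrightarrow> a < b \<and> \<not> (\<exists>c. a < c \<and> c < b)"

definition poset_connected :: "'a::order set \<Rightarrow> bool" where
  "poset_connected S \<longleftrightarrow> (\<forall>a\<in>S. \<forall>b\<in>S. (\<lambda>a b. covers a b \<or> covers b a)\<^sup>*\<^sup>* a b)"

end

theory Submission
  imports Defs
begin

text \<open>For an elementary \<open>\<phi>\<close>, every \<open>\<phi>(e\<^sub>z)\<close> is diagonal, every \<open>\<phi>(e\<^sub>x\<^sub>y)\<close> with \<open>x < y\<close> is a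
nonzero multiple of a single \<open>e\<^sub>u\<^sub>v\<close>, and every \<open>u < v\<close> arises in this way. Applying \<open>\<phi>\<close> to
\<open>[e\<^sub>z, e\<^sub>x\<^sub>y] = (e\<^sub>z(x,x) - e\<^sub>z(y,y)) e\<^sub>x\<^sub>y\<close> shows
\<open>\<phi>(e\<^sub>z)(u,u) - \<phi>(e\<^sub>z)(v,v) = e\<^sub>z(x,x) - e\<^sub>z(y,y)\<close> whenever \<open>\<theta>\<^sub>\<phi>(e\<^sub>x\<^sub>y) = e\<^sub>u\<^sub>v\<close>.
Since \<open>\<theta>\<^sub>\<phi> = \<theta>\<^sub>\<psi>\<close>, the diagonal of \<open>\<phi>(e\<^sub>z) - \<psi>(e\<^sub>z)\<close> takes equal values at the two ends
of every covering pair, so by connectedness it is constant, and it vanishes at \<open>u\<^sub>0\<close>.\<close>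

lemma eij_in_inc_alg: "(x::'a::order) \<le> y \<Longrightarrow> (eij x y :: 'a \<Rightarrow> 'a \<Rightarrow> 'k::field) \<in> inc_alg"
  unfolding inc_alg_def eij_def by auto

lemma zero_in_inc_alg: "(\<lambda>a b. 0) \<in> inc_alg"
  unfolding inc_alg_def by simp

lemma chain_len_refl: "chain_len (x::'a::{finite,order}) x = 0"
proof -
  have "{card C - 1 | C. C \<subseteq> {z. x \<le> z \<and> z \<le> x} \<and> (\<forall>a\<in>C. \<forall>b\<in>C. a \<le> b \<or> b \<le> a)} = {0}"
  proof (intro equalityI subsetI)
    fix n
    assume "n \<in> {card C - 1 | C. C \<subseteq> {z. x \<le> z \<and> z \<le> x} \<and> (\<forall>a\<in>C. \<forall>b\<in>C. a \<le> b \<or> b \<le> a)}"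
    then obtain C where C: "n = card C - 1" "C \<subseteq> {z. x \<le> z \<and> z \<le> x}"
      by blast
    then have "C \<subseteq> {x}"
      by (auto intro: order.antisym)
    then have "card C \<le> 1"
      using card_mono[of "{x}" C] by simp
    with C(1) show "n \<in> {0}"
      by simp
  qed (auto intro!: exI[of _ "{}"])
  then show ?thesis
    unfolding chain_len_def by simp
qed

lemma chain_len_ge_1: "(x::'a::{finite,order}) < y \<Longrightarrow> 1 \<le> chain_len x y"
proof -
  assume "x < y"
  let ?chains = "{C. C \<subseteq> {z. x \<le> z \<and> z \<le> y} \<and> (\<forall>a\<in>C. \<forall>b\<in>C. a \<le> b \<or> b \<le> a)}"
  have lengths: "{card C - 1 | C. C \<subseteq> {z. x \<le> z \<and> z \<le> y} \<and> (\<forall>a\<in>C. \<forall>b\<in>C. a \<le> b \<or> b \<le> a)}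
      = (\<lambda>C. card C - 1) ` ?chains"
    by auto
  have "{x, y} \<in> ?chains"
    using \<open>x < y\<close> by auto
  then have "card {x, y} - 1 \<le> Max ((\<lambda>C. card C - 1) ` ?chains)"
    by (intro Max_ge finite_imageI finite imageI)
  moreover have "card {x, y} - 1 = 1"
    using \<open>x < y\<close> by simp
  ultimately show ?thesis
    unfolding chain_len_def lengths by simp
qed

lemma chain_len_eq_0_iff: "(x::'a::{finite,order}) \<le> y \<Longrightarrow> chain_len x y = 0 \<longleftrightarrow> x = y"
  using chain_len_refl chain_len_ge_1 by (metis le_less not_one_le_zero)

lemma tilde_eij:
  fixes \<chi> :: "('a::{finite,order} \<Rightarrow> 'a \<Rightarrow> 'k::field) \<Rightarrow> ('a \<Rightarrow> 'a \<Rightarrow> 'k)"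
  assumes "x \<le> y" and "u \<le> v"
  shows "tilde \<chi> (eij x y) u v = (if chain_len x y = chain_len u v then \<chi> (eij x y) u v else 0)"
proof -
  let ?S = "{(a,b). a \<le> b \<and> chain_len a b = chain_len u v}"
  have "(\<Sum>p\<in>?S. eij x y (fst p) (snd p) * \<chi> (eij (fst p) (snd p)) u v)
      = (\<Sum>p\<in>?S. if p = (x,y) then \<chi> (eij x y) u v else 0)"
    by (rule sum.cong) (auto simp: eij_def)
  also have "\<dots> = (if (x,y) \<in> ?S then \<chi> (eij x y) u v else 0)"
    by (rule sum.delta[OF finite])
  finally show ?thesis
    unfolding tilde_def using assms by simp
qed

lemma tilde_diagonal_entry:
  fixes \<chi> :: "('a::{finite,order} \<Rightarrow> 'a \<Rightarrow> 'k::field) \<Rightarrow> ('a \<Rightarrow> 'a \<Rightarrow> 'k)"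
  shows "tilde \<chi> f a a = (\<Sum>z\<in>UNIV. f z z * \<chi> (eij z z) a a)"
proof -
  have diagonal: "{(x,y). x \<le> y \<and> chain_len x y = chain_len a a} = (\<lambda>z. (z,z)) ` UNIV"
    using chain_len_eq_0_iff by (auto simp: chain_len_refl)
  have "tilde \<chi> f a a = (\<Sum>p\<in>(\<lambda>z. (z,z)) ` UNIV. f (fst p) (snd p) * \<chi> (eij (fst p) (snd p)) a a)"
    unfolding tilde_def diagonal by simp
  then show ?thesis
    by (simp add: sum.reindex inj_on_def)
qed

lemma lie_bracket_diagonal_left:
  fixes D g :: "'a::{finite,order} \<Rightarrow> 'a \<Rightarrow> 'k::field"
  assumes "\<forall>a t. a \<noteq> t \<longrightarrow> D a t = 0"
  shows "lie_bracket D g a b = (if a \<le> b then (D a a - D b b) * g a b else 0)"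
proof (cases "a \<le> b")
  case True
  let ?I = "{t. a \<le> t \<and> t \<le> b}"
  have "(\<Sum>t\<in>?I. D a t * g t b) = (\<Sum>t\<in>?I. if t = a then D a a * g a b else 0)"
    by (rule sum.cong) (use assms in auto)
  also have "\<dots> = D a a * g a b"
    using True by (subst sum.delta[OF finite]) auto
  finally have left: "(\<Sum>t\<in>?I. D a t * g t b) = D a a * g a b" .
  have "(\<Sum>t\<in>?I. g a t * D t b) = (\<Sum>t\<in>?I. if t = b then g a b * D b b else 0)"
    by (rule sum.cong) (use assms in auto)
  also have "\<dots> = g a b * D b b"
    using True by (subst sum.delta[OF finite]) auto
  finally have right: "(\<Sum>t\<in>?I. g a t * D t b) = g a b * D b b" .
  show ?thesis
    unfolding lie_bracket_def inc_mult_def using True left right by (simp add: algebra_simps)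
next
  case False
  then have empty: "{t. a \<le> t \<and> t \<le> b} = {}"
    by (auto dest: order_trans)
  show ?thesis
    unfolding lie_bracket_def inc_mult_def empty using False by simp
qed

lemma sum_diagonal_eij:
  fixes f :: "'a::finite \<Rightarrow> 'a \<Rightarrow> 'k::field"
  shows "(\<Sum>z\<in>UNIV. f z z * eij z z w w) = f w w"
proof -
  have "(\<Sum>z\<in>UNIV. f z z * eij z z w w) = (\<Sum>z\<in>UNIV. if w = z then f z z else 0)"
    by (rule sum.cong) (auto simp: eij_def)
  also have "\<dots> = f w w"
    by simp
  finally show ?thesis .
qed

lemma eq_pair_if_diagonal_differences_agree:
  fixes u v u' v' :: "'a::order"
  assumes "u < v" and "u' < v'"
    and diff: "\<And>g :: 'a \<Rightarrow> 'a \<Rightarrow> 'k::field. g \<in> inc_alg \<Longrightarrow> g u u - g v v = g u' u' - g v' v'"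
  shows "u' = u \<and> v' = v"
proof -
  have at_u: "(eij u u u u - eij u u v v :: 'k) = eij u u u' u' - eij u u v' v'"
    by (rule diff[OF eij_in_inc_alg[OF order_refl]])
  have at_v: "(eij v v u u - eij v v v v :: 'k) = eij v v u' u' - eij v v v' v'"
    by (rule diff[OF eij_in_inc_alg[OF order_refl]])
  show ?thesis
  proof (cases "u' = u")
    case True
    then show ?thesis
      using at_v assms(1,2) by (auto simp: eij_def split: if_splits)
  next
    case False
    then have "v' = u"
      using at_u assms(1) by (auto simp: eij_def split: if_splits)
    moreover have "u' = v"
      using at_v assms(1) \<open>v' = u\<close> by (auto simp: eij_def split: if_splits)
    ultimately show ?thesis
      using assms(1,2) by simp
  qed
qed

lemma poset_connected_constant:
  assumes "poset_connected S" and "a \<in> S" and "b \<in> S"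
    and "\<And>u v. covers u v \<Longrightarrow> d u = d v"
  shows "d a = d b"
proof -
  have "(\<lambda>a b. covers a b \<or> covers b a)\<^sup>*\<^sup>* a b"
    using assms(1-3) unfolding poset_connected_def by blast
  then show ?thesis
  proof (induction rule: rtranclp_induct)
    case (step b c)
    then have "d b = d c"
      using assms(4) by metis
    with step.IH show ?case
      by simp
  qed simp
qed

context
  fixes \<phi> :: "('a::{finite,order} \<Rightarrow> 'a \<Rightarrow> 'k::field) \<Rightarrow> ('a \<Rightarrow> 'a \<Rightarrow> 'k)"
  assumes lie_aut: "is_lie_aut \<phi>"
begin

lemma lie_aut_bij: "bij_betw \<phi> inc_alg inc_alg"
  using lie_aut unfolding is_lie_aut_def by simp

lemma lie_aut_in_inc_alg: "f \<in> inc_alg \<Longrightarrow> \<phi> f \<in> inc_alg"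
  by (rule bij_betw_apply[OF lie_aut_bij])

lemma lie_aut_surj: "g \<in> inc_alg \<Longrightarrow> \<exists>f\<in>inc_alg. \<phi> f = g"
  using bij_betw_imp_surj_on[OF lie_aut_bij] by (metis imageE)

lemma lie_aut_scale: "f \<in> inc_alg \<Longrightarrow> \<phi> (\<lambda>x y. c * f x y) = (\<lambda>x y. c * \<phi> f x y)"
  using lie_aut unfolding is_lie_aut_def by simp

lemma lie_aut_bracket:
  "f \<in> inc_alg \<Longrightarrow> g \<in> inc_alg \<Longrightarrow> \<phi> (lie_bracket f g) = lie_bracket (\<phi> f) (\<phi> g)"
  using lie_aut unfolding is_lie_aut_def by simp

lemma lie_aut_support_le:
  assumes "f \<in> inc_alg" and "\<phi> f u v \<noteq> 0"
  shows "u \<le> v"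
  using lie_aut_in_inc_alg[OF assms(1)] assms(2) unfolding inc_alg_def by blast

lemma lie_aut_eij_nonzero:
  assumes "x \<le> y"
  obtains u v where "\<phi> (eij x y) u v \<noteq> 0"
proof (rule ccontr)
  assume "\<not> thesis"
  with that have "\<phi> (eij x y) = (\<lambda>a b. 0)"
    by auto
  also have "\<dots> = \<phi> (\<lambda>a b. 0)"
    using lie_aut_scale[OF zero_in_inc_alg, of 0] by simp
  finally have "eij x y = (\<lambda>a b. 0 :: 'k)"
    using inj_onD[OF bij_betw_imp_inj_on[OF lie_aut_bij]] eij_in_inc_alg[OF assms] zero_in_inc_alg
    by blast
  then have "(eij x y x y :: 'k) = 0"
    by simp
  then show False
    by (simp add: eij_def)
qed

end

context
  fixes \<phi> :: "('a::{finite,order} \<Rightarrow> 'a \<Rightarrow> 'k::field) \<Rightarrow> ('a \<Rightarrow> 'a \<Rightarrow> 'k)"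
  assumes elem: "elementary \<phi>"
begin

lemma elementary_lie_aut: "is_lie_aut \<phi>"
  using elem unfolding elementary_def by blast

lemma elementary_eij_off_diagonal:
  assumes "a \<noteq> b"
  shows "\<phi> (eij z z) a b = 0"
proof -
  obtain \<chi> where "\<phi> (eij z z) = tilde \<chi> (eij z z)"
    using elem eij_in_inc_alg[of z z] unfolding elementary_def by blast
  moreover have "tilde \<chi> (eij z z) a b = 0"
  proof (cases "a \<le> b")
    case True
    with assms have "1 \<le> chain_len a b"
      by (intro chain_len_ge_1) simp
    with True show ?thesis
      by (simp add: tilde_eij chain_len_refl)
  qed (simp add: tilde_def)
  ultimately show ?thesis
    by simp
qed

lemma elementary_diagonal_entry:
  assumes "f \<in> inc_alg"
  shows "\<phi> f a a = (\<Sum>z\<in>UNIV. f z z * \<phi> (eij z z) a a)"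
proof -
  obtain \<chi> where \<chi>: "\<forall>f\<in>inc_alg. \<phi> f = tilde \<chi> f"
    using elem unfolding elementary_def by blast
  have "\<phi> (eij z z) = tilde \<chi> (eij z z)" for z
    using \<chi> eij_in_inc_alg[of z z] by blast
  then have "\<phi> (eij z z) a a = \<chi> (eij z z) a a" for z
    by (simp add: tilde_eij chain_len_refl)
  then show ?thesis
    using \<chi> assms by (simp add: tilde_diagonal_entry)
qed

lemma elementary_eij_diagonal_difference:
  assumes "x \<le> y" and nonzero: "\<phi> (eij x y) u v \<noteq> 0"
  shows "\<phi> (eij z z) u u - \<phi> (eij z z) v v = (eij z z x x - eij z z y y :: 'k)"
proof -
  define c :: 'k where "c = eij z z x x - eij z z y y"
  have ez: "eij z z \<in> inc_alg" and exy: "eij x y \<in> inc_alg"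
    using eij_in_inc_alg assms(1) by auto
  have ez_diagonal: "\<forall>a t. a \<noteq> t \<longrightarrow> (eij z z :: 'a \<Rightarrow> 'a \<Rightarrow> 'k) a t = 0"
    by (simp add: eij_def)
  have \<phi>ez_diagonal: "\<forall>a t. a \<noteq> t \<longrightarrow> \<phi> (eij z z) a t = 0"
    by (simp add: elementary_eij_off_diagonal)
  have "lie_bracket (eij z z) (eij x y) = (\<lambda>a b. c * (eij x y :: 'a \<Rightarrow> 'a \<Rightarrow> 'k) a b)"
  proof (intro ext)
    fix a b
    show "lie_bracket (eij z z) (eij x y) a b = c * (eij x y :: 'a \<Rightarrow> 'a \<Rightarrow> 'k) a b"
      unfolding lie_bracket_diagonal_left[OF ez_diagonal] using assms(1)
      by (auto simp: eij_def c_def)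
  qed
  then have "lie_bracket (\<phi> (eij z z)) (\<phi> (eij x y)) = (\<lambda>a b. c * \<phi> (eij x y) a b)"
    using lie_aut_bracket[OF elementary_lie_aut ez exy] lie_aut_scale[OF elementary_lie_aut exy]
    by simp
  then have "lie_bracket (\<phi> (eij z z)) (\<phi> (eij x y)) u v = c * \<phi> (eij x y) u v"
    by simp
  moreover have "u \<le> v"
    using lie_aut_support_le[OF elementary_lie_aut exy nonzero] .
  ultimately have "(\<phi> (eij z z) u u - \<phi> (eij z z) v v) * \<phi> (eij x y) u v = c * \<phi> (eij x y) u v"
    by (simp add: lie_bracket_diagonal_left[OF \<phi>ez_diagonal])
  with nonzero show ?thesis
    unfolding c_def by simp
qed

lemma elementary_diagonal_difference:
  assumes "x \<le> y" and "\<phi> (eij x y) u v \<noteq> 0" and "f \<in> inc_alg"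
  shows "\<phi> f u u - \<phi> f v v = f x x - f y y"
proof -
  have "\<phi> f u u - \<phi> f v v = (\<Sum>z\<in>UNIV. f z z * (\<phi> (eij z z) u u - \<phi> (eij z z) v v))"
    using assms(3) by (simp add: elementary_diagonal_entry sum_subtractf right_diff_distrib)
  also have "\<dots> = (\<Sum>z\<in>UNIV. f z z * eij z z x x) - (\<Sum>z\<in>UNIV. f z z * eij z z y y)"
    using assms(1,2) by (simp add: elementary_eij_diagonal_difference right_diff_distrib sum_subtractf)
  also have "\<dots> = f x x - f y y"
    by (simp add: sum_diagonal_eij)
  finally show ?thesis .
qed

lemma elementary_support_less:
  assumes "x < y" and nonzero: "\<phi> (eij x y) u v \<noteq> 0"
  shows "u < v"
proof -
  have "u \<le> v"
    using lie_aut_support_le[OF elementary_lie_aut eij_in_inc_alg nonzero] assms(1) by simp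
  moreover have "\<phi> (eij x x) u u - \<phi> (eij x x) v v = (eij x x x x - eij x x y y :: 'k)"
    using elementary_eij_diagonal_difference[OF less_imp_le[OF assms(1)] nonzero] .
  then have "u \<noteq> v"
    using less_imp_neq[OF assms(1)] by (auto simp: eij_def)
  ultimately show ?thesis
    by simp
qed

lemma elementary_support_unique:
  assumes "x < y" and "\<phi> (eij x y) u v \<noteq> 0" and "\<phi> (eij x y) u' v' \<noteq> 0"
  shows "u' = u \<and> v' = v"
proof (rule eq_pair_if_diagonal_differences_agree)
  show "u < v" and "u' < v'"
    using assms elementary_support_less by blast+
  fix g :: "'a \<Rightarrow> 'a \<Rightarrow> 'k"
  assume "g \<in> inc_alg"
  then obtain f where "f \<in> inc_alg" and "\<phi> f = g"
    using lie_aut_surj[OF elementary_lie_aut] by blast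
  then show "g u u - g v v = g u' u' - g v' v'"
    using assms elementary_diagonal_difference[of x y] by auto
qed

lemma elementary_eij_eq_multiple:
  assumes "x < y" and "\<phi> (eij x y) u v \<noteq> 0"
  shows "\<phi> (eij x y) = (\<lambda>a b. \<phi> (eij x y) u v * eij u v a b)"
  using elementary_support_unique[OF assms] by (fastforce simp: eij_def)

lemma theta_eq_iff_nonzero:
  assumes "x < y"
  shows "theta \<phi> x y = (u, v) \<longleftrightarrow> \<phi> (eij x y) u v \<noteq> 0"
proof -
  have theta_eq: "theta \<phi> x y = (u', v')" if nonzero: "\<phi> (eij x y) u' v' \<noteq> 0" for u' v'
    unfolding theta_def
  proof (rule the_equality)
    show "fst (u', v') < snd (u', v') \<and>
        (\<exists>k. k \<noteq> 0 \<and> \<phi> (eij x y) = (\<lambda>a b. k * eij (fst (u', v')) (snd (u', v')) a b))"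
      using elementary_support_less[OF assms nonzero] elementary_eij_eq_multiple[OF assms nonzero]
        nonzero by auto
  next
    fix p :: "'a \<times> 'a"
    assume "fst p < snd p \<and> (\<exists>k. k \<noteq> 0 \<and> \<phi> (eij x y) = (\<lambda>a b. k * eij (fst p) (snd p) a b))"
    then obtain k where "\<phi> (eij x y) = (\<lambda>a b. k * eij (fst p) (snd p) a b)"
      by blast
    with nonzero have "eij (fst p) (snd p) u' v' \<noteq> (0::'k)"
      by auto
    then show "p = (u', v')"
      by (cases p) (auto simp: eij_def split: if_splits)
  qed
  obtain u' v' where "\<phi> (eij x y) u' v' \<noteq> 0"
    using lie_aut_eij_nonzero[OF elementary_lie_aut] assms by (meson less_imp_le)
  then show ?thesis
    using theta_eq[of u' v'] theta_eq[of u v] by auto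
qed

lemma elementary_entry_from_eij:
  assumes "u < v"
  obtains x y where "x < y" and "\<phi> (eij x y) u v \<noteq> 0"
proof -
  obtain \<chi> where \<chi>: "\<forall>f\<in>inc_alg. \<phi> f = tilde \<chi> f"
    using elem unfolding elementary_def by blast
  obtain f where f: "f \<in> inc_alg" "\<phi> f = eij u v"
    using lie_aut_surj[OF elementary_lie_aut eij_in_inc_alg] assms by (meson less_imp_le)
  let ?S = "{(x,y). x \<le> y \<and> chain_len x y = chain_len u v}"
  have "tilde \<chi> f u v = 1"
    using \<chi> f by (auto simp: eij_def)
  then have "(\<Sum>p\<in>?S. f (fst p) (snd p) * \<chi> (eij (fst p) (snd p)) u v) \<noteq> 0"
    unfolding tilde_def using less_imp_le[OF assms] by simp
  then obtain p where "p \<in> ?S" and "f (fst p) (snd p) * \<chi> (eij (fst p) (snd p)) u v \<noteq> 0"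
    by (rule sum.not_neutral_contains_not_neutral)
  then obtain x y where xy: "x \<le> y" "chain_len x y = chain_len u v"
    and "\<chi> (eij x y) u v \<noteq> 0"
    by (cases p) auto
  moreover have "x \<noteq> y"
    using xy chain_len_ge_1[OF assms] by (auto simp: chain_len_refl)
  moreover have "\<phi> (eij x y) = tilde \<chi> (eij x y)"
    using \<chi> eij_in_inc_alg[OF xy(1)] by blast
  then have "\<phi> (eij x y) u v = \<chi> (eij x y) u v"
    using tilde_eij[OF xy(1) less_imp_le[OF assms]] xy(2) by simp
  ultimately show ?thesis
    using that[of x y] by (simp add: less_le)
qed

end

lemma same_theta_imp_diagonal_difference_eq:
  fixes \<phi> \<psi> :: "('a::{finite,order} \<Rightarrow> 'a \<Rightarrow> 'k::field) \<Rightarrow> ('a \<Rightarrow> 'a \<Rightarrow> 'k)"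
  assumes "elementary \<phi>" and "elementary \<psi>"
    and "\<forall>x y. x < y \<longrightarrow> theta \<phi> x y = theta \<psi> x y"
    and "u < v"
  shows "\<phi> (eij z z) u u - \<phi> (eij z z) v v = \<psi> (eij z z) u u - \<psi> (eij z z) v v"
proof -
  obtain x y where xy: "x < y" and \<phi>_uv: "\<phi> (eij x y) u v \<noteq> 0"
    using elementary_entry_from_eij[OF assms(1,4)] by blast
  then have \<psi>_uv: "\<psi> (eij x y) u v \<noteq> 0"
    using assms(3) theta_eq_iff_nonzero[OF assms(1) xy] theta_eq_iff_nonzero[OF assms(2) xy] by simp
  show ?thesis
    using elementary_eij_diagonal_difference[OF assms(1) less_imp_le[OF xy] \<phi>_uv]
      elementary_eij_diagonal_difference[OF assms(2) less_imp_le[OF xy] \<psi>_uv] by simp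
qed

theorem lemma5p8:
  fixes \<phi> \<psi> :: "('a::{finite,order} \<Rightarrow> 'a \<Rightarrow> 'k::field) \<Rightarrow> ('a \<Rightarrow> 'a \<Rightarrow> 'k)"
    and u0 :: 'a
  assumes "poset_connected (UNIV :: 'a set)"
    and "elementary \<phi>" and "elementary \<psi>"
    and "\<forall>x y. x < y \<longrightarrow> theta \<phi> x y = theta \<psi> x y"
    and "\<forall>z. \<phi> (eij z z) u0 u0 = \<psi> (eij z z) u0 u0"
  shows "\<forall>z. \<phi> (eij z z) = \<psi> (eij z z)"
proof
  fix z
  define d where "d a = \<phi> (eij z z) a a - \<psi> (eij z z) a a" for a
  have "d u = d v" if "covers u v" for u v
    using same_theta_imp_diagonal_difference_eq[OF assms(2-4), of u v z] that
    unfolding d_def covers_def by (simp add: algebra_simps)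
  then have "d a = d u0" for a
    using poset_connected_constant[OF assms(1)] by blast
  then show "\<phi> (eij z z) = \<psi> (eij z z)"
  proof (intro ext)
    fix a b
    show "\<phi> (eij z z) a b = \<psi> (eij z z) a b"
      using \<open>d a = d u0\<close> assms(5) elementary_eij_off_diagonal[OF assms(2)]
        elementary_eij_off_diagonal[OF assms(3)]
      unfolding d_def by (cases "a = b") auto
  qed
qed

end
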